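(* Let $r\ge4$, $n\ge1$, and $p\in[0,1/2]$ with $pn$ an integer. Let $K=\frac{2pn+1}{n}$ and define $d=b_r$ if $r\le(1+K)^2/K$, and $d=1+K$ otherwise. For $i\in\{0,\dots,n-1\}$ let $X_i=(x_{j,i})_{j\ge0}$ with $x_{j,i}=d^{\,j+i/n}$. Then each $X_i$ has robustness at most $r$. Moreover, let $T\ge 1+d$, let $l=l(T)$ be the best index at $T$, suppose the predicted answers to the queries $Q_0,\dots,Q_{n-1}$ differ from the true answers in at most $\eta n$ positions where $0\le\eta\le p$, let $N$ be the number of "no" answers in the prediction, and let $m=(N-1-pn)\bmod n\in\{0,\dots,n-1\}$ be the index chosen by the scheme $\mathrm{Robust}_p$. Then $$\frac{T}{\ell(X_m,T)}\ \le\ \frac{d^{1+\frac1n+2p}}{d-1}.$$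
   Context: A schedule is an increasing sequence $(x_j)_{j\ge0}$ of positive reals (contract lengths), executed in order, so the $j$-th contract completes at time $S_j=\sum_{k=0}^j x_k$. For $T>0$, $\ell(X,T)=\max\{x_j: S_j\le T\}$ ($0$ if none). The robustness of $X$ is $\sup_{j\ge1}S_j/x_{j-1}$. For $r\ge4$, $b_r=\frac{r+\sqrt{r^2-4r}}{2}$. For an interruption $T$, the best index $l(T)\in\{0,\dots,n-1\}$ is the index $i$ maximizing $\ell(X_i,T)$ (it is unique since all contract lengths $d^{j+i/n}$ are distinct). The binary prediction consists of answers to $n$ queries $Q_0,\dots,Q_{n-1}$, where $Q_i$ asks "Is the best index $l(T)$ at most $i-1$, i.e., is the best schedule among $X_0,\dots,X_{i-1}$?"; thus the true answer to $Q_i$ is "no" exactly when $i\le l(T)$, and the error-free number of "no" answers is $l(T)+1$. The prediction error $\eta\in[0,1]$ is the fraction of the $n$ predicted answers that are wrong. *)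

theory Defs
  imports Complex_Main "HOL-Library.Extended_Real"
begin

text \<open>A schedule is a sequence of contract lengths x :: nat => real.\<close>

definition compl_time :: "(nat \<Rightarrow> real) \<Rightarrow> nat \<Rightarrow> real" where
  "compl_time x j = (\<Sum>k\<le>j. x k)"

definition ell :: "(nat \<Rightarrow> real) \<Rightarrow> real \<Rightarrow> real" where
  "ell x T = (if {j. compl_time x j \<le> T} = {} then 0
              else Sup (x ` {j. compl_time x j \<le> T}))"

definition robustness :: "(nat \<Rightarrow> real) \<Rightarrow> ereal" where
  "robustness x = (SUP j\<in>{1..}. ereal (compl_time x j / x (j - 1)))"

definition b_r :: "real \<Rightarrow> real" where
  "b_r r = (r + sqrt (r^2 - 4 * r)) / 2"

definition K_par :: "real \<Rightarrow> nat \<Rightarrow> real" where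
  "K_par p n = (2 * p * real n + 1) / real n"

definition d_par :: "real \<Rightarrow> real \<Rightarrow> nat \<Rightarrow> real" where
  "d_par r p n = (if r \<le> (1 + K_par p n)^2 / K_par p n then b_r r else 1 + K_par p n)"

definition sched :: "real \<Rightarrow> nat \<Rightarrow> nat \<Rightarrow> nat \<Rightarrow> real" where
  "sched d n i j = d powr (real j + real i / real n)"

definition is_best_index :: "(nat \<Rightarrow> nat \<Rightarrow> real) \<Rightarrow> nat \<Rightarrow> real \<Rightarrow> nat \<Rightarrow> bool" where
  "is_best_index X n T l \<longleftrightarrow> l < n \<and> (\<forall>i<n. ell (X i) T \<le> ell (X l) T)"

text \<open>Predicted answers: pred i = True means the predicted answer to Q_i is "no".
  The true answer to Q_i is "no" iff i <= l.\<close>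
definition num_errors :: "nat \<Rightarrow> (nat \<Rightarrow> bool) \<Rightarrow> nat \<Rightarrow> nat" where
  "num_errors n pred l = card {i. i < n \<and> pred i \<noteq> (i \<le> l)}"

definition num_no :: "nat \<Rightarrow> (nat \<Rightarrow> bool) \<Rightarrow> nat" where
  "num_no n pred = card {i. i < n \<and> pred i}"

text \<open>Index chosen by Robust_p: (N - 1 - pn) mod n (pn is an integer).\<close>
definition robust_index :: "real \<Rightarrow> nat \<Rightarrow> (nat \<Rightarrow> bool) \<Rightarrow> nat" where
  "robust_index p n pred = nat ((int (num_no n pred) - 1 - \<lfloor>p * real n\<rfloor>) mod int n)"

end

theory Submission
  imports Defs
begin

(* Put c = d powr (1/n). Contract j of X_i has length c^(j n + i), so the n schedules
   interleave into one sequence indexed by k = j n + i whose completion times increase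
   strictly. If k is the last index completed by time T, then the best index is k mod n, and
   X_m has completed a contract of length c^(k - \<delta>) with \<delta> = (k - m) mod n. At most p n wrong
   answers move the number N of "no" answers by at most p n away from l + 1, whence
   \<delta> \<le> 2 p n, while T is below the completion time of index k + 1, which is at most
   d c^(k+1) / (d - 1). Robustness: S_j / x_(j-1) < d^2 / (d - 1) \<le> r by the choice of d. *)

lemma geometric_sum_mult: "(d - 1) * (\<Sum>t\<le>j. d^t) = d^Suc j - (1::real)"
  using sum_gp_basic[of d j] by (simp add: algebra_simps)

lemma sched_eq_powr_mult_power:
  "d > 0 \<Longrightarrow> sched d n i j = d powr (real i / real n) * d^j"
  by (simp add: sched_def powr_add powr_realpow)

lemma compl_time_sched:
  "d > 0 \<Longrightarrow> compl_time (sched d n i) j = d powr (real i / real n) * (\<Sum>t\<le>j. d^t)"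
  by (simp add: compl_time_def sched_eq_powr_mult_power sum_distrib_left)

lemma robustness_sched_le:
  assumes d: "d > 1" and dr: "d^2 \<le> r * (d - 1)"
  shows "robustness (sched d n i) \<le> ereal r"
  unfolding robustness_def
proof (rule SUP_least)
  fix j :: nat
  assume "j \<in> {1..}"
  then have j: "Suc j = 2 + (j - 1)" by simp
  have "(d - 1) * (\<Sum>t\<le>j. d^t) \<le> d^2 * d^(j - 1)"
    unfolding geometric_sum_mult j power_add by simp
  also have "\<dots> \<le> (d - 1) * (r * d^(j - 1))"
    using mult_right_mono[OF dr, of "d^(j - 1)"] d by (simp add: algebra_simps)
  finally have "(\<Sum>t\<le>j. d^t) / d^(j - 1) \<le> r"
    using d by (simp add: divide_simps)
  then show "ereal (compl_time (sched d n i) j / sched d n i (j - 1)) \<le> ereal r"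
    using d by (simp add: compl_time_sched sched_eq_powr_mult_power)
qed

lemma b_r_gt_1_and_sq:
  assumes "r \<ge> 4"
  shows "b_r r > 1" and "(b_r r)^2 = r * (b_r r - 1)"
proof -
  define s where "s = sqrt (r^2 - 4 * r)"
  have "4 * r \<le> r^2" using assms by (simp add: power2_eq_square)
  then have s: "s \<ge> 0" "s^2 = r^2 - 4 * r" unfolding s_def by simp_all
  have b: "b_r r = (r + s) / 2" unfolding b_r_def s_def ..
  show "b_r r > 1" using b s assms by simp
  show "(b_r r)^2 = r * (b_r r - 1)" unfolding b using s by (simp add: power2_eq_square field_simps)
qed

lemma d_par_gt_1_and_sq_le:
  assumes "r \<ge> 4" and "n \<ge> 1" and "p \<ge> 0"
  shows "d_par r p n > 1" and "(d_par r p n)^2 \<le> r * (d_par r p n - 1)"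
proof -
  have "p * real n \<ge> 0" using assms(3) by simp
  then have K: "K_par p n > 0"
    using assms(2) by (simp add: K_par_def field_simps)
  have "d_par r p n > 1 \<and> (d_par r p n)^2 \<le> r * (d_par r p n - 1)"
  proof (cases "r \<le> (1 + K_par p n)^2 / K_par p n")
    case True
    then show ?thesis using b_r_gt_1_and_sq[OF assms(1)] by (simp add: d_par_def)
  next
    case False
    then have "(1 + K_par p n)^2 < r * K_par p n" using K by (simp add: field_simps)
    then show ?thesis using False K by (simp add: d_par_def)
  qed
  then show "d_par r p n > 1" and "(d_par r p n)^2 \<le> r * (d_par r p n - 1)" by auto
qed

lemma num_no_num_errors_bounds:
  assumes "l < n"
  shows "num_no n pred \<le> Suc l + num_errors n pred l"
    and "Suc l \<le> num_no n pred + num_errors n pred l"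
proof -
  let ?N = "{i. i < n \<and> pred i}" and ?E = "{i. i < n \<and> pred i \<noteq> (i \<le> l)}"
  have "{i. i < n \<and> i \<le> l} = {..l}" using assms by auto
  then have card_true: "card {i. i < n \<and> i \<le> l} = Suc l" by simp
  have "card ?N \<le> card ({i. i < n \<and> i \<le> l} \<union> ?E)" by (intro card_mono) auto
  also have "\<dots> \<le> Suc l + card ?E"
    using card_Un_le[of "{i. i < n \<and> i \<le> l}" ?E] card_true by linarith
  finally show "num_no n pred \<le> Suc l + num_errors n pred l"
    unfolding num_no_def num_errors_def .
  have "Suc l \<le> card (?N \<union> ?E)" unfolding card_true[symmetric] by (intro card_mono) auto
  also have "\<dots> \<le> card ?N + card ?E" by (rule card_Un_le)
  finally show "Suc l \<le> num_no n pred + num_errors n pred l"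
    unfolding num_no_def num_errors_def .
qed

lemma mod_diff_le_of_cong:
  fixes k l q n b :: int
  assumes "k mod n = l mod n" and "0 \<le> l - q" and "l - q \<le> b"
  shows "(k - q) mod n \<le> b"
proof -
  have "(k - q) mod n = (l - q) mod n" using assms(1) by (metis mod_diff_left_eq)
  also have "\<dots> \<le> l - q" using assms(2) by (rule zmod_le_nonneg_dividend)
  finally show ?thesis using assms(3) by linarith
qed

context
  fixes d :: real and n :: nat
  assumes d_gt_1: "d > 1" and n_pos: "n \<ge> 1"
begin

definition ratio :: real where
  "ratio = d powr (1 / real n)"

lemma ratio_gt_1: "ratio > 1"
proof -
  have "d powr 0 < d powr (1 / real n)" using d_gt_1 n_pos by (intro powr_less_mono) auto
  then show ?thesis using d_gt_1 by (simp add: ratio_def)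
qed

lemma ratio_power: "ratio ^ k = d powr (real k / real n)"
proof -
  have "ratio ^ k = ratio powr real k" using d_gt_1 by (simp add: ratio_def powr_realpow)
  also have "\<dots> = d powr (real k / real n)" by (simp add: ratio_def powr_powr)
  finally show ?thesis .
qed

lemma ratio_power_n: "ratio ^ n = d"
  using n_pos d_gt_1 by (simp add: ratio_power)

lemma ratio_power_mult_add: "ratio ^ (j * n + i) = d ^ j * ratio ^ i"
  by (simp add: power_add mult.commute[of j n] power_mult ratio_power_n)

(* Completion time of the k-th contract in the interleaved order, i.e. of contract k div n
   of the schedule X_(k mod n). *)
definition merged_time :: "nat \<Rightarrow> real" where
  "merged_time k = ratio ^ (k mod n) * (\<Sum>t\<le>k div n. d^t)"

lemma sched_eq_ratio_power: "sched d n i j = ratio ^ (j * n + i)"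
  unfolding ratio_power_mult_add ratio_power[of i]
  using d_gt_1 by (simp add: sched_eq_powr_mult_power)

lemma compl_time_sched_eq_merged_time:
  "i < n \<Longrightarrow> compl_time (sched d n i) j = merged_time (j * n + i)"
  using d_gt_1 by (simp add: compl_time_sched merged_time_def ratio_power)

lemma strict_mono_merged_time: "strict_mono merged_time"
  unfolding strict_mono_Suc_iff
proof
  fix k
  have sum_pos: "(\<Sum>t\<le>k div n. d^t) > 0"
    using d_gt_1 by (intro sum_pos) auto
  show "merged_time k < merged_time (Suc k)"
  proof (cases "Suc (k mod n) = n")
    case True
    have "merged_time k < ratio ^ n * (\<Sum>t\<le>k div n. d^t)"
      unfolding merged_time_def using True sum_pos ratio_gt_1
      by (intro mult_strict_right_mono power_strict_increasing) auto
    also have "\<dots> < 1 + d * (\<Sum>t\<le>k div n. d^t)" by (simp add: ratio_power_n)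
    also have "\<dots> = (\<Sum>t\<le>Suc (k div n). d^t)"
      by (simp only: sum.atMost_Suc_shift) (simp add: sum_distrib_left)
    also have "\<dots> = merged_time (Suc k)"
      using True n_pos by (simp add: merged_time_def mod_Suc div_Suc)
    finally show ?thesis .
  next
    case False
    then have "Suc k mod n = Suc (k mod n)" and "Suc k div n = k div n"
      using n_pos by (auto simp: mod_Suc div_Suc)
    moreover have "ratio ^ (k mod n) < ratio ^ Suc (k mod n)"
      using ratio_gt_1 by (intro power_strict_increasing) auto
    ultimately show ?thesis
      unfolding merged_time_def using sum_pos by (simp del: power_Suc)
  qed
qed

lemma merged_time_upper: "(d - 1) * merged_time k \<le> d * ratio ^ k"
proof -
  have "(d - 1) * merged_time k = ratio ^ (k mod n) * (d ^ Suc (k div n) - 1)"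
    unfolding merged_time_def geometric_sum_mult[symmetric] by (simp only: ac_simps)
  also have "\<dots> \<le> ratio ^ (k mod n) * d ^ Suc (k div n)"
    using ratio_gt_1 by (intro mult_left_mono) auto
  also have "\<dots> = d * ratio ^ (k div n * n + k mod n)"
    unfolding ratio_power_mult_add by simp
  finally show ?thesis by simp
qed

lemma merged_time_le_d: "merged_time (n - 1) \<le> d"
proof -
  have "merged_time (n - 1) = ratio ^ (n - 1)" using n_pos by (simp add: merged_time_def)
  also have "\<dots> \<le> ratio ^ n" using ratio_gt_1 by (intro power_increasing) auto
  finally show ?thesis by (simp add: ratio_power_n)
qed

lemma merged_time_unbounded: "\<exists>k. T < merged_time k"
proof -
  obtain j :: nat where "T < real j + 1" by (meson reals_Archimedean2 less_add_one less_trans)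
  also have "\<dots> \<le> (\<Sum>t\<le>j. d^t)"
    using sum_mono[of "{..j}" "\<lambda>_. 1" "\<lambda>t. d^t"] d_gt_1 by simp
  also have "\<dots> = merged_time (j * n)" using n_pos by (simp add: merged_time_def)
  finally show ?thesis by blast
qed

definition last_done :: "real \<Rightarrow> nat" where
  "last_done T = (GREATEST k. merged_time k \<le> T)"

lemma merged_time_le_iff_le_last_done:
  assumes "d \<le> T"
  shows "merged_time k \<le> T \<longleftrightarrow> k \<le> last_done T"
proof -
  obtain K where K: "T < merged_time K" using merged_time_unbounded by blast
  have bounded: "k' \<le> K" if "merged_time k' \<le> T" for k'
    using that K strict_mono_less_eq[OF strict_mono_merged_time, of K k'] by linarith
  have "merged_time 0 \<le> T"
    using strict_mono_less_eq[OF strict_mono_merged_time, of 0 "n - 1"] merged_time_le_d assms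
    by linarith
  then have completed: "merged_time (last_done T) \<le> T"
    unfolding last_done_def by (rule GreatestI_nat) (rule bounded)
  show ?thesis
  proof
    assume "merged_time k \<le> T"
    then show "k \<le> last_done T" unfolding last_done_def by (rule Greatest_le_nat) (rule bounded)
  next
    assume "k \<le> last_done T"
    then show "merged_time k \<le> T"
      using completed strict_mono_less_eq[OF strict_mono_merged_time, of k "last_done T"]
      by linarith
  qed
qed

lemma last_done_ge:
  assumes "d \<le> T"
  shows "n - 1 \<le> last_done T"
proof -
  have "merged_time (n - 1) \<le> T" using merged_time_le_d assms by linarith
  then show ?thesis using merged_time_le_iff_le_last_done[OF assms] by blast
qed

lemma ell_sched_eq:
  assumes "d \<le> T" and "i < n"
  shows "ell (sched d n i) T = ratio ^ (last_done T - (last_done T - i) mod n)"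
proof -
  define k where "k = last_done T"
  define j where "j = (k - i) div n"
  have "i \<le> k" using last_done_ge[OF assms(1)] assms(2) unfolding k_def by linarith
  then have last: "j * n + i = k - (k - i) mod n"
    using div_mult_mod_eq[of "k - i" n] unfolding j_def by linarith
  have completed: "{j'. compl_time (sched d n i) j' \<le> T} = {j'. j' * n + i \<le> k}"
    using assms by (simp add: compl_time_sched_eq_merged_time merged_time_le_iff_le_last_done k_def)
  have "sched d n i j' \<le> sched d n i j" if "j' * n + i \<le> k" for j'
  proof -
    have "j' \<le> j"
      using that n_pos unfolding j_def by (simp add: less_eq_div_iff_mult_less_eq le_diff_conv2)
    then show ?thesis
      unfolding sched_eq_ratio_power using ratio_gt_1 by (intro power_increasing) auto
  qed
  moreover have j: "j \<in> {j'. j' * n + i \<le> k}" using last by simp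
  ultimately have "Sup (sched d n i ` {j'. j' * n + i \<le> k}) = sched d n i j"
    by (intro cSup_eq_maximum) auto
  moreover have "ell (sched d n i) T = Sup (sched d n i ` {j'. j' * n + i \<le> k})"
    unfolding ell_def completed using j by auto
  ultimately show ?thesis by (simp add: sched_eq_ratio_power last k_def)
qed

lemma best_index_eq_last_done_mod:
  assumes T: "d \<le> T" and best: "is_best_index (sched d n) n T l"
  shows "l = last_done T mod n"
proof -
  define k where "k = last_done T"
  have l: "l < n" and l_best: "ell (sched d n (k mod n)) T \<le> ell (sched d n l) T"
    using best n_pos unfolding is_best_index_def by auto
  have "ell (sched d n (k mod n)) T = ratio ^ k"
    using n_pos by (simp add: ell_sched_eq[OF T] k_def minus_mod_eq_mult_div)
  then have "ratio ^ k \<le> ratio ^ (k - (k - l) mod n)"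
    using l_best by (simp add: ell_sched_eq[OF T l] k_def)
  then have "k \<le> k - (k - l) mod n" by (rule power_le_imp_le_exp[OF ratio_gt_1])
  moreover have "l \<le> k" using l last_done_ge[OF T] unfolding k_def by linarith
  ultimately have "(k - l) mod n = 0" using mod_less_eq_dividend[of "k - l" n] by linarith
  then obtain t where "k - l = n * t" by (auto elim: dvdE)
  then have "k = l + n * t" using \<open>l \<le> k\<close> by linarith
  then show ?thesis using l unfolding k_def by simp
qed

lemma robust_index_offset_le:
  assumes T: "d \<le> T" and best: "is_best_index (sched d n) n T l"
    and err: "num_errors n pred l \<le> P"
  defines "m \<equiv> nat ((int (num_no n pred) - 1 - int P) mod int n)"
  shows "m < n" and "(last_done T - m) mod n \<le> 2 * P"
proof -
  define k where "k = last_done T"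
  define q where "q = int (num_no n pred) - 1 - int P"
  have m: "int m = q mod int n" unfolding m_def q_def using n_pos by simp
  moreover have "q mod int n < int n" using n_pos by simp
  ultimately show "m < n" by linarith
  have l: "l < n" using best unfolding is_best_index_def by simp
  have "m \<le> k" using \<open>m < n\<close> last_done_ge[OF T] unfolding k_def by linarith
  then have "int ((k - m) mod n) = (int k - int m) mod int n" by (simp add: of_nat_mod of_nat_diff)
  also have "\<dots> = (int k - q) mod int n" unfolding m by (rule mod_diff_right_eq)
  also have "\<dots> \<le> 2 * int P"
  proof (rule mod_diff_le_of_cong)
    show "int k mod int n = int l mod int n"
      using best_index_eq_last_done_mod[OF T best] by (simp add: k_def of_nat_mod)
    show "0 \<le> int l - q" and "int l - q \<le> 2 * int P"
      using num_no_num_errors_bounds[OF l, of pred] err unfolding q_def by linarith+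
  qed
  finally show "(last_done T - m) mod n \<le> 2 * P" unfolding k_def by linarith
qed

lemma competitive_ratio_le:
  assumes T: "d \<le> T" and best: "is_best_index (sched d n) n T l"
    and err: "num_errors n pred l \<le> P"
  defines "m \<equiv> nat ((int (num_no n pred) - 1 - int P) mod int n)"
  shows "T / ell (sched d n m) T \<le> d * ratio ^ (2 * P + 1) / (d - 1)"
proof -
  define k where "k = last_done T"
  define \<delta> where "\<delta> = (k - m) mod n"
  have m: "m < n" and \<delta>: "\<delta> \<le> 2 * P"
    using robust_index_offset_le[OF T best err] unfolding m_def \<delta>_def k_def by auto
  have "\<delta> \<le> k" using mod_less_eq_dividend[of "k - m" n] unfolding \<delta>_def by linarith
  have ell: "ell (sched d n m) T = ratio ^ (k - \<delta>)"
    unfolding \<delta>_def k_def by (rule ell_sched_eq[OF T m])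
  have "T < merged_time (Suc k)"
    using merged_time_le_iff_le_last_done[OF T, of "Suc k"] unfolding k_def by linarith
  then have "T * (d - 1) < merged_time (Suc k) * (d - 1)" using d_gt_1 by simp
  also have "\<dots> \<le> d * ratio ^ (Suc k)"
    using merged_time_upper[of "Suc k"] by (simp only: mult.commute)
  also have "\<dots> = d * ratio ^ (\<delta> + 1) * ratio ^ (k - \<delta>)"
    using \<open>\<delta> \<le> k\<close> by (simp add: mult.assoc flip: power_add)
  also have "\<dots> \<le> d * ratio ^ (2 * P + 1) * ratio ^ (k - \<delta>)"
    using \<delta> ratio_gt_1 d_gt_1 by (intro mult_right_mono mult_left_mono power_increasing) auto
  finally have "T \<le> d * ratio ^ (2 * P + 1) / (d - 1) * ratio ^ (k - \<delta>)"
    using d_gt_1 by (simp add: pos_le_divide_eq)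
  then show ?thesis
    unfolding ell using ratio_gt_1 by (simp add: pos_divide_le_eq)
qed

end

theorem theorem4:
  fixes r p :: real and n :: nat
  assumes "r \<ge> 4" and "n \<ge> 1" and "0 \<le> p" and "p \<le> 1/2"
    and "p * real n \<in> \<int>"
  shows "(\<forall>i<n. robustness (sched (d_par r p n) n i) \<le> ereal r) \<and>
    (\<forall>(T::real) (l::nat) (pred::nat \<Rightarrow> bool) (\<eta>::real).
       T \<ge> 1 + d_par r p n \<and>
       is_best_index (sched (d_par r p n) n) n T l \<and>
       0 \<le> \<eta> \<and> \<eta> \<le> p \<and>
       real (num_errors n pred l) \<le> \<eta> * real n
     \<longrightarrow> T / ell (sched (d_par r p n) n (robust_index p n pred)) T
           \<le> d_par r p n powr (1 + 1 / real n + 2 * p) / (d_par r p n - 1))"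
proof -
  define d where "d = d_par r p n"
  have d: "d > 1" "d^2 \<le> r * (d - 1)"
    using d_par_gt_1_and_sq_le[OF assms(1-3)] unfolding d_def by auto
  obtain z where z: "p * real n = of_int z" using assms(5) by (auto elim: Ints_cases)
  define P where "P = nat z"
  have P: "p * real n = real P"
    using z assms(3) unfolding P_def
    by (metis of_int_0_le_iff of_nat_0_le_iff of_nat_nat zero_le_mult_iff)
  have index: "robust_index p n pred = nat ((int (num_no n pred) - 1 - int P) mod int n)" for pred
    unfolding robust_index_def P by simp
  have "d * ratio d n ^ (2 * P + 1) = d powr (1 + real (2 * P + 1) / real n)"
    unfolding ratio_power[OF d(1) assms(2)] using d(1) by (simp only: powr_add powr_one)
  also have "real (2 * P + 1) / real n = 1 / real n + 2 * p"
    using assms(2) P by (simp add: field_simps)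
  finally have bound: "d * ratio d n ^ (2 * P + 1) = d powr (1 + 1 / real n + 2 * p)"
    by (simp add: add.assoc)
  have "num_errors n pred l \<le> P" if "real (num_errors n pred l) \<le> \<eta> * real n" "\<eta> \<le> p"
    for pred l \<eta>
    using that mult_right_mono[of \<eta> p "real n"] P by simp
  then show ?thesis
    using robustness_sched_le[OF d] competitive_ratio_le[OF d(1) assms(2)]
    unfolding d_def[symmetric] index bound[symmetric] by fastforce
qed

end
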